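(* Let $G$ be a graph with a tight clique cutset $Q$, let $H$ be a tight component of $G-Q$, and let $V_2 = V(G)\setminus V(H)$. Let $\ell \ge \chi(G)+1$ and let $\alpha,\beta$ be two $\ell$-colourings of $G$ whose restrictions to $V_2$ are equal. Suppose $H$ is $\ell_1$-mixing for every integer $\ell_1 \ge \chi(H)+1$. Then there is a path between $\alpha$ and $\beta$ in $\mathcal{R}_\ell(G)$.
   Context: All graphs are finite and simple. A $k$-colouring is a proper colouring with colours $\{1,\dots,k\}$; $\chi$ denotes chromatic number. $\mathcal{R}_k(G)$ has the $k$-colourings of $G$ as vertices, two being adjacent if they differ on exactly one vertex; $G$ is $k$-mixing if $\mathcal{R}_k(G)$ is connected. A clique cutset of $G$ is a clique $Q$ such that $G-Q$ has more components than $G$. A clique cutset $Q$ is tight if some component $H$ of $G-Q$ is complete to $Q$ (every vertex of $H$ adjacent to every vertex of $Q$); such an $H$ is a tight component. *)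

theory Defs
  imports Main
begin

definition graph :: "'a set \<Rightarrow> ('a \<Rightarrow> 'a \<Rightarrow> bool) \<Rightarrow> bool" where
  "graph V E \<longleftrightarrow> finite V \<and> (\<forall>u v. E u v \<longrightarrow> u \<in> V \<and> v \<in> V)
     \<and> (\<forall>u v. E u v \<longrightarrow> E v u) \<and> (\<forall>v. \<not> E v v)"

definition induced :: "('a \<Rightarrow> 'a \<Rightarrow> bool) \<Rightarrow> 'a set \<Rightarrow> 'a \<Rightarrow> 'a \<Rightarrow> bool" where
  "induced E S = (\<lambda>u v. E u v \<and> u \<in> S \<and> v \<in> S)"

definition components :: "'a set \<Rightarrow> ('a \<Rightarrow> 'a \<Rightarrow> bool) \<Rightarrow> 'a set set" where
  "components V E = {{y. (induced E V)\<^sup>*\<^sup>* x y} | x. x \<in> V}"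

definition clique :: "('a \<Rightarrow> 'a \<Rightarrow> bool) \<Rightarrow> 'a set \<Rightarrow> bool" where
  "clique E Q \<longleftrightarrow> (\<forall>u\<in>Q. \<forall>v\<in>Q. u \<noteq> v \<longrightarrow> E u v)"

definition clique_cutset :: "'a set \<Rightarrow> ('a \<Rightarrow> 'a \<Rightarrow> bool) \<Rightarrow> 'a set \<Rightarrow> bool" where
  "clique_cutset V E Q \<longleftrightarrow> Q \<subseteq> V \<and> clique E Q \<and>
     card (components (V - Q) (induced E (V - Q))) > card (components V E)"

definition complete_to :: "('a \<Rightarrow> 'a \<Rightarrow> bool) \<Rightarrow> 'a set \<Rightarrow> 'a set \<Rightarrow> bool" where
  "complete_to E A B \<longleftrightarrow> (\<forall>a\<in>A. \<forall>b\<in>B. E a b)"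

definition tight_component :: "'a set \<Rightarrow> ('a \<Rightarrow> 'a \<Rightarrow> bool) \<Rightarrow> 'a set \<Rightarrow> 'a set \<Rightarrow> bool" where
  "tight_component V E Q H \<longleftrightarrow> clique_cutset V E Q \<and>
     H \<in> components (V - Q) (induced E (V - Q)) \<and> complete_to E H Q"

text \<open>k-colourings with colours 1..k; by convention a colouring is 0 outside V,
  so colourings of G are identified with functions on V.\<close>
definition colouring :: "'a set \<Rightarrow> ('a \<Rightarrow> 'a \<Rightarrow> bool) \<Rightarrow> nat \<Rightarrow> ('a \<Rightarrow> nat) \<Rightarrow> bool" where
  "colouring V E k c \<longleftrightarrow> (\<forall>v\<in>V. c v \<in> {1..k}) \<and> (\<forall>v. v \<notin> V \<longrightarrow> c v = 0)
     \<and> (\<forall>u\<in>V. \<forall>v\<in>V. E u v \<longrightarrow> c u \<noteq> c v)"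

definition chromatic_number :: "'a set \<Rightarrow> ('a \<Rightarrow> 'a \<Rightarrow> bool) \<Rightarrow> nat" where
  "chromatic_number V E = (LEAST k. \<exists>c. colouring V E k c)"

definition recol_adj :: "'a set \<Rightarrow> ('a \<Rightarrow> 'a \<Rightarrow> bool) \<Rightarrow> nat \<Rightarrow> ('a \<Rightarrow> nat) \<Rightarrow> ('a \<Rightarrow> nat) \<Rightarrow> bool" where
  "recol_adj V E k c d \<longleftrightarrow> colouring V E k c \<and> colouring V E k d \<and>
     card {v\<in>V. c v \<noteq> d v} = 1"

definition mixing :: "'a set \<Rightarrow> ('a \<Rightarrow> 'a \<Rightarrow> bool) \<Rightarrow> nat \<Rightarrow> bool" where
  "mixing V E k \<longleftrightarrow> (\<forall>c d. colouring V E k c \<longrightarrow> colouring V E k d \<longrightarrow>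
     (recol_adj V E k)\<^sup>*\<^sup>* c d)"

end

theory Submission
  imports Defs
begin

text \<open>The vertices of \<open>H\<close> are complete to the clique \<open>Q\<close>, so every \<open>l\<close>-colouring that agrees
  with \<open>\<alpha>\<close> outside \<open>H\<close> colours \<open>H\<close> from the \<open>l - |Q|\<close> colours that \<open>\<alpha>\<close> does not use on \<open>Q\<close>.
  Conversely, since \<open>H\<close> has no neighbours outside \<open>H \<union> Q\<close>, every colouring of \<open>H\<close> from these
  colours extends by \<open>\<alpha>\<close>. Relabelling the free colours as \<open>1..l - |Q|\<close> thus embeds the
  reconfiguration graph of the \<open>(l - |Q|)\<close>-colourings of \<open>H\<close> into \<open>R\<^sub>l(G)\<close>, with \<open>\<alpha>\<close> and \<open>\<beta>\<close> in
  the image. The same relabelling applied to an optimal colouring of \<open>G\<close> gives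
  \<open>\<chi>(H) + |Q| \<le> \<chi>(G)\<close>, so \<open>l - |Q| \<ge> \<chi>(H) + 1\<close> and \<open>H\<close> is \<open>(l - |Q|)\<close>-mixing.\<close>

lemma colouring_in_colours: "colouring V E k c \<Longrightarrow> v \<in> V \<Longrightarrow> c v \<in> {1..k}"
  unfolding colouring_def by blast

lemma colouring_outside: "colouring V E k c \<Longrightarrow> v \<notin> V \<Longrightarrow> c v = 0"
  unfolding colouring_def by blast

lemma colouring_adj: "colouring V E k c \<Longrightarrow> u \<in> V \<Longrightarrow> v \<in> V \<Longrightarrow> E u v \<Longrightarrow> c u \<noteq> c v"
  unfolding colouring_def by blast

lemma chromatic_number_le: "colouring V E k c \<Longrightarrow> chromatic_number V E \<le> k"
  unfolding chromatic_number_def by (auto intro: Least_le)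

lemma chromatic_number_colouring:
  "colouring V E k c \<Longrightarrow> \<exists>c. colouring V E (chromatic_number V E) c"
  unfolding chromatic_number_def by (auto intro: LeastI)

lemma rtranclp_map:
  assumes "\<And>x y. R x y \<Longrightarrow> S (f x) (f y)" and "R\<^sup>*\<^sup>* a b"
  shows "S\<^sup>*\<^sup>* (f a) (f b)"
  using assms(2) by induction (auto intro: rtranclp.rtrancl_into_rtrancl assms(1))

lemma components_subset:
  assumes "H \<in> components W F"
  shows "H \<subseteq> W"
proof
  fix y
  assume "y \<in> H"
  then obtain x where "(induced F W)\<^sup>*\<^sup>* x y" and "x \<in> W"
    using assms unfolding components_def by blast
  then show "y \<in> W"
    by (cases rule: rtranclp.cases) (auto simp: induced_def)
qed

lemma components_closed:
  assumes "H \<in> components W F" "u \<in> H" "v \<in> W" "F u v"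
  shows "v \<in> H"
proof -
  obtain x where H: "H = {y. (induced F W)\<^sup>*\<^sup>* x y}"
    using assms(1) unfolding components_def by blast
  have "induced F W u v"
    using assms components_subset unfolding induced_def by blast
  then show ?thesis
    using assms(2) H by (auto intro: rtranclp.rtrancl_into_rtrancl)
qed

lemma colouring_inj_on_clique:
  assumes "colouring V E k c" "clique E Q" "Q \<subseteq> V"
  shows "inj_on c Q"
proof (rule inj_onI)
  fix u v
  assume "u \<in> Q" "v \<in> Q" "c u = c v"
  then show "u = v"
    using assms colouring_adj[OF assms(1), of u v] unfolding clique_def by blast
qed

lemma card_colours_off_clique:
  assumes "colouring V E k c" "clique E Q" "Q \<subseteq> V" "finite Q"
  shows "card ({1..k} - c ` Q) = k - card Q" and "card Q \<le> k"
proof -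
  have cQ: "c ` Q \<subseteq> {1..k}"
    using assms(3) colouring_in_colours[OF assms(1)] by blast
  have card_cQ: "card (c ` Q) = card Q"
    using card_image[OF colouring_inj_on_clique[OF assms(1-3)]] .
  show "card ({1..k} - c ` Q) = k - card Q"
    using card_Diff_subset[OF finite_imageI[OF assms(4)] cQ] card_cQ by simp
  show "card Q \<le> k"
    using card_mono[OF _ cQ] card_cQ by simp
qed

lemma colouring_complete_to_avoids:
  assumes "colouring V E k c" "complete_to E H Q" "H \<subseteq> V" "Q \<subseteq> V" "v \<in> H"
  shows "c v \<in> {1..k} - c ` Q"
  using assms colouring_in_colours[OF assms(1)] colouring_adj[OF assms(1), of v]
  unfolding complete_to_def by blast

lemma colouring_relabel:
  assumes g: "bij_betw g {1..m} P" and "\<forall>v\<in>H. c v \<in> P"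
    and "\<forall>u\<in>H. \<forall>v\<in>H. E u v \<longrightarrow> c u \<noteq> c v"
  shows "colouring H (induced E H) m (\<lambda>v. if v \<in> H then inv_into {1..m} g (c v) else 0)"
proof -
  have "inj_on (inv_into {1..m} g) P"
    using g by (simp add: bij_betw_def inj_on_inv_into)
  moreover have "inv_into {1..m} g ` P = {1..m}"
    using bij_betw_inv_into[OF g] by (simp add: bij_betw_def)
  ultimately show ?thesis
    using assms unfolding colouring_def induced_def by (auto simp: inj_on_eq_iff)
qed

lemma chromatic_number_complete_to_clique:
  assumes "colouring V E k c" "clique E Q" "Q \<subseteq> V" "finite Q"
    and "H \<subseteq> V" "complete_to E H Q"
  shows "chromatic_number H (induced E H) + card Q \<le> chromatic_number V E"
proof -
  define n where "n = chromatic_number V E"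
  obtain c0 where c0: "colouring V E n c0"
    using chromatic_number_colouring[OF assms(1)] n_def by blast
  define P where "P = {1..n} - c0 ` Q"
  have "card P = n - card Q" and Q_le: "card Q \<le> n"
    using card_colours_off_clique[OF c0 assms(2-4)] P_def by simp_all
  then obtain g where "bij_betw g {1..n - card Q} P"
    using finite_same_card_bij[of "{1..n - card Q}" P] P_def by auto
  moreover have "\<forall>v\<in>H. c0 v \<in> P"
    using colouring_complete_to_avoids[OF c0 assms(6,5,3)] P_def by blast
  moreover have "\<forall>u\<in>H. \<forall>v\<in>H. E u v \<longrightarrow> c0 u \<noteq> c0 v"
    using colouring_adj[OF c0] assms(5) by blast
  ultimately have "chromatic_number H (induced E H) \<le> n - card Q"
    by (rule chromatic_number_le[OF colouring_relabel])
  then show ?thesis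
    using Q_le n_def by linarith
qed

lemma tight_componentD:
  assumes "graph V E" "tight_component V E Q H"
  shows "clique E Q" "Q \<subseteq> V" "finite Q" "H \<subseteq> V - Q" "complete_to E H Q"
proof -
  show "clique E Q" "Q \<subseteq> V" "complete_to E H Q"
    using assms(2) unfolding tight_component_def clique_cutset_def by blast+
  then show "finite Q"
    using assms(1) finite_subset unfolding graph_def by blast
  show "H \<subseteq> V - Q"
    using assms(2) components_subset unfolding tight_component_def by blast
qed

lemma tight_component_neighbour:
  assumes "graph V E" "tight_component V E Q H" "x \<in> H" "y \<in> V - H" "E x y"
  shows "y \<in> Q"
proof (rule ccontr)
  assume "y \<notin> Q"
  then have "y \<in> H"
    using assms tight_componentD(4)[OF assms(1,2)]
      components_closed[of H "V - Q" "induced E (V - Q)" x y]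
    unfolding tight_component_def induced_def by blast
  with assms(4) show False
    by blast
qed

locale colouring_extension =
  fixes V :: "'a set" and E :: "'a \<Rightarrow> 'a \<Rightarrow> bool" and l :: nat and \<alpha> :: "'a \<Rightarrow> nat"
    and W :: "'a set" and m :: nat and g :: "nat \<Rightarrow> nat"
  assumes E_symp: "symp E"
    and W_subset: "W \<subseteq> V"
    and \<alpha>_colouring: "colouring V E l \<alpha>"
    and g_inj: "inj_on g {1..m}"
    and g_colours: "g ` {1..m} \<subseteq> {1..l}"
    and boundary: "\<forall>x\<in>W. \<forall>y\<in>V - W. E x y \<longrightarrow> \<alpha> y \<notin> g ` {1..m}"
begin

definition extend :: "('a \<Rightarrow> nat) \<Rightarrow> 'a \<Rightarrow> nat" where
  "extend d v = (if v \<in> W then g (d v) else \<alpha> v)"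

lemma extend_colouring:
  assumes d: "colouring W (induced E W) m d"
  shows "colouring V E l (extend d)"
proof -
  have range: "extend d v \<in> {1..l}" if "v \<in> V" for v
  proof (cases "v \<in> W")
    case True
    then have "g (d v) \<in> {1..l}"
      using g_colours colouring_in_colours[OF d] by blast
    with True show ?thesis
      by (simp add: extend_def)
  qed (use that colouring_in_colours[OF \<alpha>_colouring] in \<open>simp add: extend_def\<close>)
  have outside: "extend d v = 0" if "v \<notin> V" for v
    using that W_subset colouring_outside[OF \<alpha>_colouring] unfolding extend_def by auto
  have boundary_edge: "extend d x \<noteq> extend d y" if "x \<in> W" "y \<in> V - W" "E x y" for x y
  proof -
    have "\<alpha> y \<notin> g ` {1..m}"
      using boundary that by blast
    moreover have "g (d x) \<in> g ` {1..m}"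
      using colouring_in_colours[OF d that(1)] by (rule imageI)
    ultimately have "g (d x) \<noteq> \<alpha> y"
      by metis
    with that show ?thesis
      by (simp add: extend_def)
  qed
  have proper: "extend d u \<noteq> extend d v" if uv: "u \<in> V" "v \<in> V" "E u v" for u v
  proof -
    consider "u \<in> W" "v \<in> W" | "u \<in> W" "v \<notin> W" | "u \<notin> W" "v \<in> W" | "u \<notin> W" "v \<notin> W"
      by blast
    then show ?thesis
    proof cases
      case 1
      then have "d u \<noteq> d v" and "d u \<in> {1..m}" and "d v \<in> {1..m}"
        using uv colouring_adj[OF d] colouring_in_colours[OF d] by (auto simp: induced_def)
      with 1 show ?thesis
        using g_inj by (simp add: extend_def inj_on_eq_iff)
    next
      case 2
      then show ?thesis
        using boundary_edge uv by blast
    next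
      case 3
      moreover have "E v u"
        using E_symp uv(3) by (rule sympD)
      ultimately show ?thesis
        using boundary_edge[of v u] uv by auto
    next
      case 4
      then show ?thesis
        using colouring_adj[OF \<alpha>_colouring uv] by (simp add: extend_def)
    qed
  qed
  show ?thesis
    unfolding colouring_def using range outside proper by blast
qed

lemma extend_recol_adj:
  assumes "recol_adj W (induced E W) m d1 d2"
  shows "recol_adj V E l (extend d1) (extend d2)"
proof -
  have d1: "colouring W (induced E W) m d1" and d2: "colouring W (induced E W) m d2"
    and one: "card {v\<in>W. d1 v \<noteq> d2 v} = 1"
    using assms unfolding recol_adj_def by simp_all
  have "{v\<in>V. extend d1 v \<noteq> extend d2 v} = {v\<in>W. d1 v \<noteq> d2 v}"
    using W_subset g_inj colouring_in_colours[OF d1] colouring_in_colours[OF d2]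
    by (auto simp: extend_def inj_on_eq_iff)
  then show ?thesis
    using one extend_colouring[OF d1] extend_colouring[OF d2] unfolding recol_adj_def by simp
qed

lemma extend_recol_path:
  assumes "(recol_adj W (induced E W) m)\<^sup>*\<^sup>* d1 d2"
  shows "(recol_adj V E l)\<^sup>*\<^sup>* (extend d1) (extend d2)"
  using rtranclp_map[of "recol_adj W (induced E W) m" "recol_adj V E l" extend,
      OF extend_recol_adj assms] .

lemma extend_onto:
  assumes \<gamma>: "colouring V E l \<gamma>" and "\<forall>v\<in>V - W. \<gamma> v = \<alpha> v" and "\<forall>v\<in>W. \<gamma> v \<in> g ` {1..m}"
  shows "\<exists>d. colouring W (induced E W) m d \<and> extend d = \<gamma>"
proof (intro exI conjI)
  let ?d = "\<lambda>v. if v \<in> W then inv_into {1..m} g (\<gamma> v) else 0"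
  have "\<forall>u\<in>W. \<forall>v\<in>W. E u v \<longrightarrow> \<gamma> u \<noteq> \<gamma> v"
    using W_subset colouring_adj[OF \<gamma>] by blast
  then show "colouring W (induced E W) m ?d"
    using assms(3) inj_on_imp_bij_betw[OF g_inj] by (intro colouring_relabel)
  show "extend ?d = \<gamma>"
  proof
    fix v
    show "extend ?d v = \<gamma> v"
    proof (cases "v \<in> W")
      case True
      have "\<gamma> v \<in> g ` {1..m}"
        using assms(3) True by blast
      from f_inv_into_f[OF this] show ?thesis
        using True by (simp add: extend_def)
    next
      case False
      then show ?thesis
        using assms(2) colouring_outside[OF \<gamma>] colouring_outside[OF \<alpha>_colouring]
        by (cases "v \<in> V") (simp_all add: extend_def)
    qed
  qed
qed

end

lemma tight_component_colouring_extension: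
  assumes "graph V E" "tight_component V E Q H" "colouring V E l \<alpha>"
    and "bij_betw g {1..m} ({1..l} - \<alpha> ` Q)"
  shows "colouring_extension V E l \<alpha> H m g"
proof
  show "symp E"
    using assms(1) unfolding graph_def symp_def by blast
  show "H \<subseteq> V"
    using tight_componentD(4)[OF assms(1,2)] by blast
  show "inj_on g {1..m}" "g ` {1..m} \<subseteq> {1..l}"
    using assms(4) unfolding bij_betw_def by auto
  show "\<forall>x\<in>H. \<forall>y\<in>V - H. E x y \<longrightarrow> \<alpha> y \<notin> g ` {1..m}"
    using tight_component_neighbour[OF assms(1,2)] assms(4) unfolding bij_betw_def by blast
qed (fact assms(3))

lemma tight_component_extend_onto:
  assumes "graph V E" "tight_component V E Q H" "colouring V E l \<alpha>"
    and g: "bij_betw g {1..m} ({1..l} - \<alpha> ` Q)"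
    and \<gamma>: "colouring V E l \<gamma>" "\<forall>v\<in>V - H. \<gamma> v = \<alpha> v"
  shows "\<exists>d. colouring H (induced E H) m d \<and> colouring_extension.extend \<alpha> H g d = \<gamma>"
proof -
  interpret colouring_extension V E l \<alpha> H m g
    using tight_component_colouring_extension[OF assms(1-4)] .
  have Q: "Q \<subseteq> V" "Q \<subseteq> V - H" and H: "H \<subseteq> V" "complete_to E H Q"
    using tight_componentD[OF assms(1,2)] by blast+
  have "\<gamma> ` Q = \<alpha> ` Q"
    using \<gamma>(2) Q(2) by (intro image_cong) force+
  moreover have "g ` {1..m} = {1..l} - \<alpha> ` Q"
    using g by (rule bij_betw_imp_surj_on)
  ultimately have "\<forall>v\<in>H. \<gamma> v \<in> g ` {1..m}"
    using colouring_complete_to_avoids[OF \<gamma>(1) H(2,1) Q(1)] by simp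
  then show ?thesis
    using extend_onto[OF \<gamma>] by blast
qed

theorem lemma6:
  fixes V :: "'a set" and E :: "'a \<Rightarrow> 'a \<Rightarrow> bool" and Q H :: "'a set"
    and l :: nat and \<alpha> \<beta> :: "'a \<Rightarrow> nat"
  assumes "graph V E"
    and "tight_component V E Q H"
    and "l \<ge> chromatic_number V E + 1"
    and "colouring V E l \<alpha>" and "colouring V E l \<beta>"
    and "\<forall>v \<in> V - H. \<alpha> v = \<beta> v"
    and "\<forall>l1. l1 \<ge> chromatic_number H (induced E H) + 1 \<longrightarrow> mixing H (induced E H) l1"
  shows "(recol_adj V E l)\<^sup>*\<^sup>* \<alpha> \<beta>"
proof -
  have Q: "clique E Q" "Q \<subseteq> V" "finite Q" and H: "H \<subseteq> V - Q" "complete_to E H Q"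
    using tight_componentD[OF assms(1,2)] by blast+
  define m where "m = l - card Q"
  have "card ({1..l} - \<alpha> ` Q) = m"
    using card_colours_off_clique(1)[OF assms(4) Q] m_def by simp
  then obtain g where g: "bij_betw g {1..m} ({1..l} - \<alpha> ` Q)"
    using finite_same_card_bij[of "{1..m}" "{1..l} - \<alpha> ` Q"] by auto
  interpret colouring_extension V E l \<alpha> H m g
    using tight_component_colouring_extension[OF assms(1,2,4) g] .
  have "chromatic_number H (induced E H) + card Q \<le> chromatic_number V E"
    using chromatic_number_complete_to_clique[OF assms(4) Q] H by blast
  then have mixing: "mixing H (induced E H) m"
    using assms(3,7) m_def by simp
  obtain a where a: "colouring H (induced E H) m a" "extend a = \<alpha>"
    using tight_component_extend_onto[OF assms(1,2,4) g assms(4)] by blast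
  obtain b where b: "colouring H (induced E H) m b" "extend b = \<beta>"
    using tight_component_extend_onto[OF assms(1,2,4) g assms(5)] assms(6) by auto
  have "(recol_adj H (induced E H) m)\<^sup>*\<^sup>* a b"
    using mixing a(1) b(1) unfolding mixing_def by blast
  from extend_recol_path[OF this] show ?thesis
    using a(2) b(2) by simp
qed

end
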